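(* Let $n=3$, let $S\subset\mathbb{R}^3$ be a smooth cylinder surface with axis vector $e$, and let $q(t)=(A(t),a(t))$ satisfy the constrained Newton's equation for the rolling motion on $S$ of the particle of radius $r$, mass $m$, mass distribution parameter $\gamma$, subject to the constant force $-mge$; write $\dot q=(UA,u)$ and define the angular velocity vector $\omega$ by $Ux=\omega\times x$ for all $x\in\mathbb{R}^3$. Then $\omega\cdot e$ is constant in $t$ and $$\frac{d}{dt}(u\cdot e)+\frac{\gamma^2}{1+\gamma^2}r^2\lambda(a)(\omega\cdot e)(\omega\cdot\nu_a)+\frac{g}{1+\gamma^2}=0,\qquad \frac{d}{dt}(\omega\cdot\nu_a)=\lambda(a)(\omega\cdot e)(u\cdot e).$$ Consequently the height $h=a\cdot e$ of the center of mass (for which $\dot h=u\cdot e$) satisfies, with $\omega_e=\omega\cdot e$ and $\omega_\nu=\omega\cdot\nu_a$, $$\ddot h+\frac{\gamma^2}{1+\gamma^2}r^2\lambda(a)\omega_e(0)\Big[\omega_\nu(0)+\omega_e(0)\int_0^t\lambda(a(s))\dot h(s)\,ds\Big]+\frac{g}{1+\gamma^2}=0.$$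
   Context: The particle is a ball of radius $r>0$ with rotationally symmetric mass distribution of total mass $m$ and second-moment matrix per unit mass $\lambda I$, $\lambda=(r\gamma)^2/2$, $\gamma>0$. $S$ is the surface of positions of the particle's center, $\nu_a$ its inward unit normal at $a$, $\tau_a=\nu_a\times e$, and $\lambda(a)$ the principal curvature of $S$ at $a$ in direction $\tau_a$ (i.e. $\mathbb{S}_a\tau_a=\lambda(a)\tau_a$, where the shape operator is $\mathbb{S}_av=-D_v\nu$). On $M=SO(3)\times S$ use the kinetic energy metric $\langle(U_\xi A,u_\xi),(U_\eta A,u_\eta)\rangle=m\{\tfrac{(r\gamma)^2}{2}\mathrm{Tr}(U_\xi U_\eta^\dagger)+u_\xi\cdot u_\eta\}$ with Levi-Civita connection $\nabla$; for $\dot q=(UA,u)$ one has $\frac{\nabla\dot q}{dt}=(\dot UA,\frac{Du}{dt})$, $D$ the Levi-Civita connection of $S$. The no-slip space at $q=(A,a)$ is $\mathfrak{S}_q=\{(UA,u):u=rU\nu_a\}$ and $\mathfrak{S}^\perp_q$ is its orthogonal complement inside $T_qM$. A path satisfies the constrained Newton's equation with force $f=(0,-mge)$ if $\dot q(t)\in\mathfrak{S}_{q(t)}$ for all $t$ and $\frac{\nabla\dot q}{dt}=m^{-1}f+N$ with $N(t)\in\mathfrak{S}^\perp_{q(t)}$. *)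

theory Defs
  imports "HOL-Analysis.Analysis"
begin

text \<open>The surface S is the regular zero set of phi : R^3 -> R, whose gradient is the
  function Phi.  The unit normal field (orientation fixed by the sign of phi).\<close>
definition unorm :: "(real^3 \<Rightarrow> real^3) \<Rightarrow> real^3 \<Rightarrow> real^3" where
  "unorm Phi x = (1 / norm (Phi x)) *\<^sub>R Phi x"

definition shape_op :: "(real^3 \<Rightarrow> real^3) \<Rightarrow> real^3 \<Rightarrow> real^3 \<Rightarrow> real^3" where
  "shape_op Phi a v = - vector_derivative (\<lambda>s. unorm Phi (a + s *\<^sub>R v)) (at 0)"

definition tau_dir :: "(real^3 \<Rightarrow> real^3) \<Rightarrow> real^3 \<Rightarrow> real^3 \<Rightarrow> real^3" where
  "tau_dir Phi e a = cross3 (unorm Phi a) e"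

definition curv :: "(real^3 \<Rightarrow> real^3) \<Rightarrow> real^3 \<Rightarrow> real^3 \<Rightarrow> real" where
  "curv Phi e a = (THE l. shape_op Phi a (tau_dir Phi e a) = l *\<^sub>R tau_dir Phi e a)"

definition skew :: "real^3^3 \<Rightarrow> bool" where
  "skew W \<longleftrightarrow> transpose W = - W"

definition tangentM :: "(real^3 \<Rightarrow> real^3) \<Rightarrow> real^3^3 \<Rightarrow> real^3 \<Rightarrow> ((real^3^3) \<times> (real^3)) set" where
  "tangentM Phi A a = {(X, w). (\<exists>W. skew W \<and> X = W ** A) \<and> w \<bullet> unorm Phi a = 0}"

definition kin_metric :: "real \<Rightarrow> real \<Rightarrow> real \<Rightarrow> ((real^3^3) \<times> (real^3)) \<Rightarrow> ((real^3^3) \<times> (real^3)) \<Rightarrow> real" where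
  "kin_metric m r \<gamma> p q =
     m * ((r * \<gamma>)\<^sup>2 / 2 * trace (fst p ** transpose (fst q)) + snd p \<bullet> snd q)"

definition noslip :: "(real^3 \<Rightarrow> real^3) \<Rightarrow> real \<Rightarrow> real^3^3 \<Rightarrow> real^3 \<Rightarrow> ((real^3^3) \<times> (real^3)) set" where
  "noslip Phi r A a = {p \<in> tangentM Phi A a.
      \<exists>U. skew U \<and> fst p = U ** A \<and> snd p = r *\<^sub>R (U *v unorm Phi a)}"

definition noslip_perp :: "(real^3 \<Rightarrow> real^3) \<Rightarrow> real \<Rightarrow> real \<Rightarrow> real \<Rightarrow> real^3^3 \<Rightarrow> real^3 \<Rightarrow> ((real^3^3) \<times> (real^3)) set" where
  "noslip_perp Phi m r \<gamma> A a = {p \<in> tangentM Phi A a.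
      \<forall>z \<in> noslip Phi r A a. kin_metric m r \<gamma> p z = 0}"

text \<open>Covariant derivative Du/dt on S: tangential part of the ambient derivative.\<close>
definition covD :: "(real^3 \<Rightarrow> real^3) \<Rightarrow> real^3 \<Rightarrow> real^3 \<Rightarrow> real^3" where
  "covD Phi a du = du - (du \<bullet> unorm Phi a) *\<^sub>R unorm Phi a"

definition angvel :: "real^3^3 \<Rightarrow> real^3" where
  "angvel U = (THE w. \<forall>x. U *v x = cross3 w x)"

end

theory Submission
  imports Defs
begin

text \<open>
  The no-slip condition forces \<open>u = r \<omega> \<times> \<nu>\<close>. On a cylinder the normal \<open>\<nu>\<close> is constant along
  the axis \<open>e\<close>, so in the orthonormal frame \<open>(\<nu>, \<tau>, e)\<close> its derivative along the path is
  \<open>\<nu>' = -\<lambda> (u \<bullet> \<tau>) \<tau>\<close>, and \<open>u' = r (\<omega> \<times> \<nu>' + \<omega>' \<times> \<nu>)\<close>. Newton's equation says that the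
  constraint force does no work on the virtual no-slip motions \<open>(hat x A, r x \<times> \<nu>)\<close>, which gives
  \<open>r \<gamma>\<^sup>2 \<omega>' \<bullet> x + (u' + g e) \<bullet> (x \<times> \<nu>) = 0\<close> for every \<open>x\<close>. Testing with \<open>x = \<nu>, e, \<tau>\<close> yields
  \<open>\<omega>' \<bullet> e = 0\<close>, the equation for \<open>(u \<bullet> e)'\<close>, and \<open>(\<omega> \<bullet> \<nu>)' = \<lambda> (\<omega> \<bullet> e) (u \<bullet> e)\<close>. As \<open>\<omega> \<bullet> e\<close> is
  constant, integrating the last equation and substituting it into the second gives the equation
  for the height.
\<close>

section \<open>Skew matrices and the cross product\<close>


definition axial :: "real^3^3 \<Rightarrow> real^3" where
  "axial M = vector [(M$3$2 - M$2$3) / 2, (M$1$3 - M$3$1) / 2, (M$2$1 - M$1$2) / 2]"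

definition hat :: "real^3 \<Rightarrow> real^3^3" where
  "hat w = vector [vector [0, - w$3, w$2], vector [w$3, 0, - w$1], vector [- w$2, w$1, 0]]"

lemma skew_mult_eq_cross:
  assumes "skew U"
  shows "U *v x = cross3 (axial U) x"
proof -
  have anti: "U$i$j = - U$j$i" for i j
    using arg_cong[OF assms[unfolded skew_def], of "\<lambda>M. M$j$i"] by (simp add: transpose_def)
  have diag: "U$1$1 = 0" "U$2$2 = 0" "U$3$3 = 0"
    using anti[of 1 1] anti[of 2 2] anti[of 3 3] by linarith+
  show ?thesis
    using anti[of 1 2] anti[of 1 3] anti[of 2 3]
    by (simp add: vec_eq_iff forall_3 matrix_vector_mult_def sum_3 diag axial_def cross3_def
        vector_def algebra_simps)
qed

lemma cross3_left_cancel: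
  assumes "\<And>x. cross3 w x = cross3 w' x"
  shows "w = w'"
  using assms[of "axis 1 1"] assms[of "axis 2 1"]
  by (simp add: cross3_def vec_eq_iff forall_3 axis_def)

lemma angvel_eq_axial: "skew U \<Longrightarrow> angvel U = axial U"
  unfolding angvel_def by (rule the_equality) (auto simp: skew_mult_eq_cross intro: cross3_left_cancel)

lemma skew_hat: "skew (hat w)"
  by (simp add: skew_def hat_def transpose_def vec_eq_iff forall_3 vector_def)

lemma hat_mult_eq_cross: "hat w *v x = cross3 w x"
  by (simp add: hat_def cross3_def matrix_vector_mult_def vec_eq_iff forall_3 sum_3 vector_def
      algebra_simps)

lemma trace_mult_transpose_hat: "trace (M ** transpose (hat w)) = 2 * (axial M \<bullet> w)"
  by (simp add: hat_def axial_def trace_def transpose_def matrix_matrix_mult_def sum_3 vector_def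
      inner_vec_def algebra_simps add_divide_distrib diff_divide_distrib)

lemma bounded_linear_axial: "bounded_linear axial"
  by (auto intro!: linearI simp: linear_conv_bounded_linear[symmetric] axial_def vec_eq_iff forall_3
      vector_def algebra_simps diff_divide_distrib add_divide_distrib)

lemma inner_cross_cross:
  "cross3 a b \<bullet> cross3 c d = (a \<bullet> c) * (b \<bullet> d) - (a \<bullet> d) * (b \<bullet> c)"
  by (simp add: cross3_simps)

section \<open>Differentiation\<close>

definition sgn_deriv :: "'a::real_inner \<Rightarrow> 'a \<Rightarrow> 'a" where
  "sgn_deriv x h = (h - (sgn x \<bullet> h) *\<^sub>R sgn x) /\<^sub>R norm x"

lemma linear_sgn_deriv: "linear (sgn_deriv x)"
  by (rule linearI) (simp_all add: sgn_deriv_def algebra_simps)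

lemma sgn_deriv_orthogonal:
  assumes "x \<noteq> 0"
  shows "sgn_deriv x h \<bullet> x = 0"
proof -
  have "sgn x \<bullet> sgn x = 1"
    using assms norm_sgn[of x] by (simp add: norm_eq_1)
  then have "(h - (sgn x \<bullet> h) *\<^sub>R sgn x) \<bullet> sgn x = 0"
    by (simp add: inner_diff_left inner_diff_right inner_commute)
  then show ?thesis
    by (simp add: sgn_deriv_def sgn_div_norm)
qed

lemma sgn_deriv_orthogonal_common:
  "x \<bullet> e = 0 \<Longrightarrow> h \<bullet> e = 0 \<Longrightarrow> sgn_deriv x h \<bullet> e = 0"
  by (simp add: sgn_deriv_def sgn_div_norm inner_diff_left)

lemma has_derivative_sgn:
  fixes x :: "'a::real_inner"
  assumes "x \<noteq> 0"
  shows "(sgn has_derivative sgn_deriv x) (at x)"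
proof -
  have sgn_eq: "sgn = (\<lambda>y::'a. inverse (norm y) *\<^sub>R y)"
    by (simp add: fun_eq_iff sgn_div_norm)
  show ?thesis
    unfolding sgn_eq using assms
    by (auto intro!: derivative_eq_intros has_derivative_norm
        simp: fun_eq_iff sgn_deriv_def sgn_div_norm inner_commute scaleR_diff_right)
qed

lemma unorm_eq_sgn: "unorm Phi x = sgn (Phi x)"
  by (simp add: unorm_def sgn_div_norm divide_inverse_commute)

lemma unorm_has_vector_derivative:
  assumes a: "(a has_vector_derivative v) (at t)"
    and nonzero: "Phi (a t) \<noteq> 0" and Phi: "(Phi has_derivative D) (at (a t))"
  shows "((\<lambda>s. unorm Phi (a s)) has_vector_derivative sgn_deriv (Phi (a t)) (D v)) (at t)"
proof -
  have "((\<lambda>s. sgn (Phi (a s))) has_derivative (\<lambda>h. sgn_deriv (Phi (a t)) (D (h *\<^sub>R v)))) (at t)"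
    using a Phi has_derivative_sgn[OF nonzero] unfolding has_vector_derivative_def
    by (auto intro: has_derivative_compose)
  moreover have "sgn_deriv (Phi (a t)) (D (h *\<^sub>R v)) = h *\<^sub>R sgn_deriv (Phi (a t)) (D v)" for h
    by (simp add: linear_cmul[OF linear_sgn_deriv] linear_cmul[OF has_derivative_linear[OF Phi]])
  ultimately show ?thesis
    by (simp add: has_vector_derivative_def unorm_eq_sgn)
qed

lemma shape_op_eq_sgn_deriv:
  assumes "Phi a \<noteq> 0" and "(Phi has_derivative D) (at a)"
  shows "shape_op Phi a v = - sgn_deriv (Phi a) (D v)"
proof -
  have "((\<lambda>s::real. a + s *\<^sub>R v) has_vector_derivative v) (at 0)"
    by (auto intro!: derivative_eq_intros)
  then have "((\<lambda>s. unorm Phi (a + s *\<^sub>R v)) has_vector_derivative sgn_deriv (Phi a) (D v)) (at 0)"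
    using unorm_has_vector_derivative[of "\<lambda>s. a + s *\<^sub>R v" v 0 Phi D] assms by simp
  then show ?thesis
    by (simp add: shape_op_def vector_derivative_at)
qed

lemma interval_integral_eq_diff_of_derivative:
  fixes f g :: "real \<Rightarrow> real"
  assumes J: "is_interval J" "a \<in> J" "b \<in> J" and g: "continuous_on J g"
    and f: "\<And>s. s \<in> J \<Longrightarrow> (f has_real_derivative g s) (at s)"
  shows "(LBINT s=a..b. g s) = f b - f a"
proof (rule interval_integral_FTC_finite)
  have segment: "{min a b..max a b} \<subseteq> J"
    using closed_segment_subset[OF J(2,3) is_interval_convex[OF J(1)]]
    by (simp add: closed_segment_eq_real_ivl min_def max_def split: if_splits)
  show "continuous_on {min a b..max a b} g"
    using continuous_on_subset[OF g segment] .
  show "(f has_vector_derivative g s) (at s within {min a b..max a b})"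
    if "min a b \<le> s" "s \<le> max a b" for s
    using f[of s] that segment
    by (auto simp: has_real_derivative_iff_has_vector_derivative[symmetric] has_field_derivative_at_within)
qed

lemma has_real_derivative_inner:
  assumes "(f has_vector_derivative f') (at t)" and "(h has_vector_derivative h') (at t)"
  shows "((\<lambda>s. f s \<bullet> h s) has_real_derivative f t \<bullet> h' + f' \<bullet> h t) (at t)"
  using bounded_bilinear.has_vector_derivative[OF bounded_bilinear_inner assms]
  by (simp add: has_real_derivative_iff_has_vector_derivative)

lemma has_real_derivative_inner_const:
  assumes "(f has_vector_derivative f') (at t)"
  shows "((\<lambda>s. f s \<bullet> c) has_real_derivative f' \<bullet> c) (at t)"
  using has_real_derivative_inner[OF assms has_vector_derivative_const[of c]] by simp

section \<open>Orthonormal frames\<close>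

locale orthonormal_pair =
  fixes n e :: "real^3"
  assumes unit_n: "n \<bullet> n = 1" and unit_e: "e \<bullet> e = 1" and orthogonal_n_e: "n \<bullet> e = 0"
begin

abbreviation \<tau> :: "real^3" where
  "\<tau> \<equiv> cross3 n e"

lemma unit_tau: "\<tau> \<bullet> \<tau> = 1"
  using unit_n unit_e orthogonal_n_e by (simp add: inner_cross_cross inner_commute)

lemma cross_tau_n: "cross3 \<tau> n = e"
  using unit_n orthogonal_n_e by (simp add: cross_skew[of "cross3 n e"] Lagrange inner_commute)

lemma cross_tau_e: "cross3 \<tau> e = - n"
  using unit_e orthogonal_n_e by (simp add: cross_skew[of "cross3 n e"] Lagrange inner_commute)

lemma cross_e_n: "cross3 e n = - \<tau>"
  by (simp add: cross_skew[of e])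

lemma frame_expansion: "x = (x \<bullet> n) *\<^sub>R n + (x \<bullet> \<tau>) *\<^sub>R \<tau> + (x \<bullet> e) *\<^sub>R e"
proof -
  have "cross3 \<tau> (cross3 x \<tau>) = x - (\<tau> \<bullet> x) *\<^sub>R \<tau>"
    using Lagrange[of \<tau> x \<tau>] unit_tau by simp
  moreover have "cross3 x \<tau> = (x \<bullet> e) *\<^sub>R n - (x \<bullet> n) *\<^sub>R e"
    by (simp add: Lagrange)
  then have "cross3 \<tau> (cross3 x \<tau>) = (x \<bullet> e) *\<^sub>R e + (x \<bullet> n) *\<^sub>R n"
    by (simp add: Cross3.right_diff_distrib cross_mult_right cross_tau_n cross_tau_e)
  ultimately show ?thesis
    by (simp add: inner_commute algebra_simps)
qed

lemma tangent_expansion: "x \<bullet> n = 0 \<Longrightarrow> x = (x \<bullet> \<tau>) *\<^sub>R \<tau> + (x \<bullet> e) *\<^sub>R e"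
  using frame_expansion[of x] by simp

lemma virtual_work_in_frame:
  fixes W' u' :: "real^3" and r \<gamma> g :: real
  assumes "r > 0" and "\<gamma> > 0"
    and virtual_work: "\<And>x. r * \<gamma>\<^sup>2 * (W' \<bullet> x) + (u' + g *\<^sub>R e) \<bullet> cross3 x n = 0"
  shows "W' \<bullet> n = 0"
    and "r * \<gamma>\<^sup>2 * (W' \<bullet> e) = u' \<bullet> \<tau>"
    and "r * \<gamma>\<^sup>2 * (W' \<bullet> \<tau>) + u' \<bullet> e + g = 0"
proof -
  show "W' \<bullet> n = 0"
    using virtual_work[of n] assms(1,2) by simp
  have "(u' + g *\<^sub>R e) \<bullet> cross3 e n = - (u' \<bullet> \<tau>)"
    by (simp add: cross_e_n inner_add_left inner_commute[of e] dot_cross_self)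
  then show "r * \<gamma>\<^sup>2 * (W' \<bullet> e) = u' \<bullet> \<tau>"
    using virtual_work[of e] by simp
  show "r * \<gamma>\<^sup>2 * (W' \<bullet> \<tau>) + u' \<bullet> e + g = 0"
    using virtual_work[of \<tau>] unit_e by (simp add: cross_tau_n inner_add_left add.assoc)
qed

lemma rolling_constraint_equations:
  fixes W W' n' u u' :: "real^3" and r \<gamma> g \<kappa> :: real
  assumes r: "r > 0" and \<gamma>: "\<gamma> > 0"
    and u: "u = r *\<^sub>R cross3 W n"
    and n': "n' = - (\<kappa> * (u \<bullet> \<tau>)) *\<^sub>R \<tau>"
    and u': "u' = r *\<^sub>R (cross3 W n' + cross3 W' n)"
    and virtual_work: "\<And>x. r * \<gamma>\<^sup>2 * (W' \<bullet> x) + (u' + g *\<^sub>R e) \<bullet> cross3 x n = 0"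
  shows "W' \<bullet> e = 0"
    and "u' \<bullet> e = - (\<gamma>\<^sup>2 / (1 + \<gamma>\<^sup>2) * r\<^sup>2 * \<kappa> * (W \<bullet> e) * (W \<bullet> n) + g / (1 + \<gamma>\<^sup>2))"
    and "W \<bullet> n' + W' \<bullet> n = \<kappa> * (W \<bullet> e) * (u \<bullet> e)"
proof -
  have u_tau: "u \<bullet> \<tau> = - r * (W \<bullet> e)"
    using u unit_n orthogonal_n_e by (simp add: inner_cross_cross)
  have u_e: "u \<bullet> e = r * (W \<bullet> \<tau>)"
    using u cross_triple[of W n e] by (simp add: inner_commute)
  have n'_eq: "n' = (\<kappa> * r * (W \<bullet> e)) *\<^sub>R \<tau>"
    using n' u_tau by simp
  have u'_tau: "u' \<bullet> \<tau> = - r * (W' \<bullet> e)"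
    using u' n'_eq unit_n orthogonal_n_e
    by (simp add: inner_add_left cross_mult_right dot_cross_self inner_cross_cross)
  have "cross3 W \<tau> \<bullet> e = - (W \<bullet> n)" "cross3 W' n \<bullet> e = W' \<bullet> \<tau>"
    using cross_triple[of W \<tau> e] cross_triple[of W' n e] by (simp_all add: cross_tau_e inner_commute)
  then have u'_e: "u' \<bullet> e = r * (W' \<bullet> \<tau>) - \<kappa> * r\<^sup>2 * (W \<bullet> e) * (W \<bullet> n)"
    using u' n'_eq by (simp add: cross_mult_right power2_eq_square algebra_simps)
  note W'_n = virtual_work_in_frame(1)[OF r \<gamma> virtual_work]
    and W'_e = virtual_work_in_frame(2)[OF r \<gamma> virtual_work]
    and W'_tau = virtual_work_in_frame(3)[OF r \<gamma> virtual_work]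
  have pos: "1 + \<gamma>\<^sup>2 > 0"
    by (simp add: add_pos_nonneg)
  show "W' \<bullet> e = 0"
  proof -
    have "r * (1 + \<gamma>\<^sup>2) * (W' \<bullet> e) = 0"
      using W'_e u'_tau by (simp add: algebra_simps)
    then show ?thesis
      using r pos by auto
  qed
  have "(1 + \<gamma>\<^sup>2) * (u' \<bullet> e)
      = u' \<bullet> e + r * \<gamma>\<^sup>2 * (W' \<bullet> \<tau>) - \<gamma>\<^sup>2 * r\<^sup>2 * \<kappa> * (W \<bullet> e) * (W \<bullet> n)"
    unfolding u'_e by (simp add: algebra_simps)
  also have "\<dots> = - (\<gamma>\<^sup>2 * r\<^sup>2 * \<kappa> * (W \<bullet> e) * (W \<bullet> n) + g)"
    using W'_tau by simp
  finally have "(1 + \<gamma>\<^sup>2) * (u' \<bullet> e) = - (\<gamma>\<^sup>2 * r\<^sup>2 * \<kappa> * (W \<bullet> e) * (W \<bullet> n) + g)" .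
  with pos have "u' \<bullet> e = - (\<gamma>\<^sup>2 * r\<^sup>2 * \<kappa> * (W \<bullet> e) * (W \<bullet> n) + g) / (1 + \<gamma>\<^sup>2)"
    by (simp add: eq_divide_eq mult.commute)
  then show "u' \<bullet> e = - (\<gamma>\<^sup>2 / (1 + \<gamma>\<^sup>2) * r\<^sup>2 * \<kappa> * (W \<bullet> e) * (W \<bullet> n) + g / (1 + \<gamma>\<^sup>2))"
    by (simp add: add_divide_distrib diff_divide_distrib)
  show "W \<bullet> n' + W' \<bullet> n = \<kappa> * (W \<bullet> e) * (u \<bullet> e)"
    using n'_eq W'_n u_e by simp
qed

end

section \<open>Cylinder surfaces\<close>

locale cylinder_surface =
  fixes \<phi> :: "real^3 \<Rightarrow> real" and Phi :: "real^3 \<Rightarrow> real^3"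
    and DPhi :: "real^3 \<Rightarrow> ((real^3) \<Rightarrow>\<^sub>L (real^3))" and e :: "real^3"
  assumes unit_axis: "norm e = 1"
    and grad: "\<And>x. (\<phi> has_derivative (\<lambda>h. Phi x \<bullet> h)) (at x)"
    and hess: "\<And>x. (Phi has_derivative blinfun_apply (DPhi x)) (at x)"
    and hess_cont: "continuous_on UNIV DPhi"
    and regular: "\<And>x. \<phi> x = 0 \<Longrightarrow> Phi x \<noteq> 0"
    and cyl: "\<And>x s. \<phi> (x + s *\<^sub>R e) = \<phi> x"
begin

abbreviation normal_deriv :: "real^3 \<Rightarrow> real^3 \<Rightarrow> real^3" where
  "normal_deriv x v \<equiv> sgn_deriv (Phi x) (blinfun_apply (DPhi x) v)"

lemma gradient_orthogonal_axis: "Phi x \<bullet> e = 0"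
proof -
  have line: "((\<lambda>s::real. x + s *\<^sub>R e) has_derivative (\<lambda>h. h *\<^sub>R e)) (at 0)"
    by (auto intro!: derivative_eq_intros)
  have "((\<lambda>s. \<phi> (x + s *\<^sub>R e)) has_derivative (\<lambda>h. Phi (x + 0 *\<^sub>R e) \<bullet> (h *\<^sub>R e))) (at 0)"
    by (rule has_derivative_compose[OF line grad])
  then have "((\<lambda>s::real. \<phi> x) has_derivative (\<lambda>h. h * (Phi x \<bullet> e))) (at 0)"
    by (simp add: cyl)
  from has_derivative_unique[OF this has_derivative_const] show ?thesis
    by (metis mult_1)
qed

lemma gradient_axis_invariant: "Phi (x + s *\<^sub>R e) = Phi x"
proof -
  have "((\<lambda>y. \<phi> (y + s *\<^sub>R e)) has_derivative (\<lambda>h. Phi (x + s *\<^sub>R e) \<bullet> h)) (at x)"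
    by (rule has_derivative_compose[of "\<lambda>y. y + s *\<^sub>R e", OF _ grad, simplified])
       (auto intro!: derivative_eq_intros)
  then have "(\<phi> has_derivative (\<lambda>h. Phi (x + s *\<^sub>R e) \<bullet> h)) (at x)"
    by (simp add: cyl)
  from has_derivative_unique[OF this grad] show ?thesis
    by (metis inner_commute vector_eq)
qed

lemma hessian_orthogonal_axis: "blinfun_apply (DPhi x) h \<bullet> e = 0"
proof -
  have "((\<lambda>y. Phi y \<bullet> e) has_derivative (\<lambda>h. blinfun_apply (DPhi x) h \<bullet> e)) (at x)"
    by (auto intro!: derivative_eq_intros hess)
  then have "((\<lambda>y. 0::real) has_derivative (\<lambda>h. blinfun_apply (DPhi x) h \<bullet> e)) (at x)"
    by (simp add: gradient_orthogonal_axis)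
  from has_derivative_unique[OF this has_derivative_const] show ?thesis
    by metis
qed

lemma hessian_axis: "blinfun_apply (DPhi x) e = 0"
proof -
  have line: "((\<lambda>s::real. x + s *\<^sub>R e) has_derivative (\<lambda>h. h *\<^sub>R e)) (at 0)"
    by (auto intro!: derivative_eq_intros)
  have "((\<lambda>s. Phi (x + s *\<^sub>R e)) has_derivative (\<lambda>h. blinfun_apply (DPhi (x + 0 *\<^sub>R e)) (h *\<^sub>R e)))
      (at 0)"
    by (rule has_derivative_compose[OF line hess])
  then have "((\<lambda>s::real. Phi x) has_derivative (\<lambda>h. h *\<^sub>R blinfun_apply (DPhi x) e)) (at 0)"
    by (simp add: gradient_axis_invariant blinfun.scaleR_right)
  from has_derivative_unique[OF this has_derivative_const] show ?thesis
    by (metis scaleR_one)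
qed

lemma normal_frame:
  assumes "\<phi> x = 0"
  shows "orthonormal_pair (unorm Phi x) e"
proof
  show "unorm Phi x \<bullet> unorm Phi x = 1"
    using regular[OF assms] norm_sgn[of "Phi x"] by (simp add: unorm_eq_sgn norm_eq_1)
  show "e \<bullet> e = 1"
    using unit_axis by (simp add: norm_eq_1)
  show "unorm Phi x \<bullet> e = 0"
    by (simp add: unorm_eq_sgn sgn_div_norm gradient_orthogonal_axis)
qed

lemma normal_deriv_orthogonal:
  assumes "\<phi> x = 0"
  shows "normal_deriv x v \<bullet> unorm Phi x = 0" and "normal_deriv x v \<bullet> e = 0"
  using sgn_deriv_orthogonal[OF regular[OF assms]]
  by (simp_all add: unorm_eq_sgn sgn_div_norm gradient_orthogonal_axis hessian_orthogonal_axis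
      sgn_deriv_orthogonal_common)

lemma normal_deriv_tau:
  assumes "\<phi> x = 0"
  shows "normal_deriv x (tau_dir Phi e x) = - curv Phi e x *\<^sub>R tau_dir Phi e x"
proof -
  interpret orthonormal_pair "unorm Phi x" e
    using normal_frame[OF assms] .
  define L where "L = normal_deriv x \<tau>"
  have L: "L = (L \<bullet> \<tau>) *\<^sub>R \<tau>"
    using frame_expansion[of L] normal_deriv_orthogonal[OF assms] unfolding L_def by simp
  have shape: "shape_op Phi x \<tau> = (- (L \<bullet> \<tau>)) *\<^sub>R \<tau>"
    using shape_op_eq_sgn_deriv[OF regular[OF assms] hess] L unfolding L_def by simp
  have "curv Phi e x = - (L \<bullet> \<tau>)"
    unfolding curv_def tau_dir_def
  proof (rule the_equality)
    fix l assume "shape_op Phi x \<tau> = l *\<^sub>R \<tau>"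
    then show "l = - (L \<bullet> \<tau>)"
      using shape unit_tau by (metis scaleR_cancel_right inner_zero_left zero_neq_one)
  qed (fact shape)
  then show ?thesis
    using L unfolding L_def tau_dir_def by simp
qed

lemma normal_deriv_tangent:
  assumes "\<phi> x = 0" and tangent: "v \<bullet> unorm Phi x = 0"
  shows "normal_deriv x v = - (curv Phi e x * (v \<bullet> tau_dir Phi e x)) *\<^sub>R tau_dir Phi e x"
proof -
  interpret orthonormal_pair "unorm Phi x" e
    using normal_frame[OF assms(1)] .
  have lin: "linear (normal_deriv x)"
    using linear_compose[OF bounded_linear.linear[OF blinfun.bounded_linear_right] linear_sgn_deriv]
    by (simp add: o_def)
  have "normal_deriv x v = normal_deriv x ((v \<bullet> \<tau>) *\<^sub>R \<tau> + (v \<bullet> e) *\<^sub>R e)"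
    using arg_cong[OF tangent_expansion[OF tangent], of "normal_deriv x"] .
  also have "\<dots> = (v \<bullet> \<tau>) *\<^sub>R normal_deriv x \<tau> + (v \<bullet> e) *\<^sub>R normal_deriv x e"
    by (simp only: linear_add[OF lin] linear_cmul[OF lin])
  finally show ?thesis
    using normal_deriv_tau[OF assms(1)]
    by (simp add: hessian_axis linear_0[OF linear_sgn_deriv] tau_dir_def mult.commute)
qed

lemma continuous_on_curv:
  fixes a :: "'a::t2_space \<Rightarrow> real^3"
  assumes "continuous_on S a" and "\<And>s. s \<in> S \<Longrightarrow> \<phi> (a s) = 0"
  shows "continuous_on S (\<lambda>s. curv Phi e (a s))"
proof -
  have curv_eq: "curv Phi e (a s) = - (normal_deriv (a s) (tau_dir Phi e (a s)) \<bullet> tau_dir Phi e (a s))"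
    if "s \<in> S" for s
  proof -
    interpret orthonormal_pair "unorm Phi (a s)" e
      using normal_frame[OF assms(2)[OF that]] .
    show ?thesis
      using normal_deriv_tau[OF assms(2)[OF that]] unit_tau by (simp add: tau_dir_def)
  qed
  have Phi: "continuous_on S (\<lambda>s. Phi (a s))"
    using continuous_on_compose2[OF continuous_at_imp_continuous_on assms(1)]
      has_derivative_continuous[OF hess] by blast
  have nonzero: "\<And>s. s \<in> S \<Longrightarrow> norm (Phi (a s)) \<noteq> 0"
    using regular assms(2) by simp
  have DPhi: "continuous_on S (\<lambda>s. DPhi (a s))"
    using continuous_on_compose2[OF hess_cont assms(1)] by simp
  have tau: "continuous_on S (\<lambda>s. tau_dir Phi e (a s))"
    unfolding tau_dir_def unorm_eq_sgn sgn_div_norm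
    by (rule continuous_on_cross) (use Phi nonzero in \<open>auto intro!: continuous_intros\<close>)+
  show ?thesis
    using Phi nonzero blinfun.continuous_on[OF DPhi tau] tau
    by (subst continuous_on_cong[OF refl curv_eq])
       (auto simp: sgn_deriv_def sgn_div_norm intro!: continuous_intros)
qed

end

section \<open>Rolling motion\<close>

lemma noslip_velocity:
  assumes A: "orthogonal_matrix A" and noslip: "(U ** A, u) \<in> noslip Phi r A a"
  shows "skew U" and "u = r *\<^sub>R cross3 (angvel U) (unorm Phi a)"
proof -
  obtain W where W: "skew W" "U ** A = W ** A" "u = r *\<^sub>R (W *v unorm Phi a)"
    using noslip unfolding noslip_def by auto
  have "U = W"
    using arg_cong[OF W(2), of "\<lambda>M. M ** transpose A"] A
    by (simp add: orthogonal_matrix_def flip: matrix_mul_assoc)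
  with W show "skew U" and "u = r *\<^sub>R cross3 (angvel U) (unorm Phi a)"
    by (simp_all add: skew_mult_eq_cross angvel_eq_axial)
qed

lemma noslip_perp_virtual_work:
  assumes A: "orthogonal_matrix A" and "m \<noteq> 0" "r \<noteq> 0"
    and perp: "(X ** A, v) \<in> noslip_perp Phi m r \<gamma> A a"
  shows "r * \<gamma>\<^sup>2 * (axial X \<bullet> x) + v \<bullet> cross3 x (unorm Phi a) = 0"
proof -
  define z where "z = (hat x ** A, r *\<^sub>R (hat x *v unorm Phi a))"
  have "z \<in> noslip Phi r A a"
    unfolding noslip_def tangentM_def z_def
    using skew_hat[of x] by (auto simp: hat_mult_eq_cross dot_cross_self)
  then have "kin_metric m r \<gamma> (X ** A, v) z = 0"
    using perp unfolding noslip_perp_def by auto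
  moreover have "trace ((X ** A) ** transpose (hat x ** A)) = 2 * (axial X \<bullet> x)"
    using A by (simp add: matrix_transpose_mul matrix_mul_assoc orthogonal_matrix_def
        trace_mult_transpose_hat flip: matrix_mul_assoc[of X])
  ultimately have "m * r * (r * \<gamma>\<^sup>2 * (axial X \<bullet> x) + v \<bullet> cross3 x (unorm Phi a)) = 0"
    by (simp add: kin_metric_def z_def hat_mult_eq_cross power2_eq_square algebra_simps)
  then show ?thesis
    using assms(2,3) by simp
qed

lemma covD_inner_tangent:
  assumes "w \<bullet> unorm Phi a = 0"
  shows "covD Phi a v \<bullet> w = v \<bullet> w"
  using assms by (simp add: covD_def inner_diff_left inner_commute[of "unorm Phi a"])

locale rolling_on_cylinder = cylinder_surface \<phi> Phi DPhi e
  for \<phi> :: "real^3 \<Rightarrow> real" and Phi :: "real^3 \<Rightarrow> real^3"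
    and DPhi :: "real^3 \<Rightarrow> ((real^3) \<Rightarrow>\<^sub>L (real^3))" and e :: "real^3" +
  fixes r m \<gamma> g :: real and J :: "real set"
    and A U U' :: "real \<Rightarrow> real^3^3" and a u u' :: "real \<Rightarrow> real^3"
  assumes r: "r > 0" and m: "m > 0" and \<gamma>: "\<gamma> > 0"
    and J: "open J" "is_interval J" "0 \<in> J"
    and orthogonal: "\<And>t. t \<in> J \<Longrightarrow> orthogonal_matrix (A t)"
    and onS: "\<And>t. t \<in> J \<Longrightarrow> \<phi> (a t) = 0"
    and dU: "\<And>t. t \<in> J \<Longrightarrow> (U has_vector_derivative U' t) (at t)"
    and da: "\<And>t. t \<in> J \<Longrightarrow> (a has_vector_derivative u t) (at t)"
    and du: "\<And>t. t \<in> J \<Longrightarrow> (u has_vector_derivative u' t) (at t)"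
    and noslip: "\<And>t. t \<in> J \<Longrightarrow> (U t ** A t, u t) \<in> noslip Phi r (A t) (a t)"
    and newton: "\<And>t. t \<in> J \<Longrightarrow>
        (U' t ** A t - 0, covD Phi (a t) (u' t) - (- g *\<^sub>R e))
          \<in> noslip_perp Phi m r \<gamma> (A t) (a t)"
begin

abbreviation \<omega> :: "real \<Rightarrow> real^3" where
  "\<omega> t \<equiv> angvel (U t)"

abbreviation \<nu> :: "real \<Rightarrow> real^3" where
  "\<nu> t \<equiv> unorm Phi (a t)"

abbreviation \<kappa> :: "real \<Rightarrow> real" where
  "\<kappa> t \<equiv> curv Phi e (a t)"

lemma velocity_eq:
  assumes "t \<in> J"
  shows "u t = r *\<^sub>R cross3 (\<omega> t) (\<nu> t)"
  using noslip_velocity(2)[OF orthogonal[OF assms] noslip[OF assms]] .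

lemma angvel_has_vector_derivative:
  assumes "t \<in> J"
  shows "(\<omega> has_vector_derivative axial (U' t)) (at t)"
proof (rule has_vector_derivative_transform_within_open[OF _ J(1) assms])
  show "((\<lambda>s. axial (U s)) has_vector_derivative axial (U' t)) (at t)"
    using bounded_linear.has_vector_derivative[OF bounded_linear_axial dU[OF assms]] .
  show "\<And>s. s \<in> J \<Longrightarrow> axial (U s) = \<omega> s"
    using noslip_velocity(1)[OF orthogonal noslip] by (simp add: angvel_eq_axial)
qed

lemma normal_has_vector_derivative:
  "t \<in> J \<Longrightarrow> (\<nu> has_vector_derivative normal_deriv (a t) (u t)) (at t)"
  using unorm_has_vector_derivative[OF da regular[OF onS] hess] .

lemma acceleration_eq:
  assumes "t \<in> J"
  shows "u' t = r *\<^sub>R (cross3 (\<omega> t) (normal_deriv (a t) (u t)) + cross3 (axial (U' t)) (\<nu> t))"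
proof -
  have "bounded_bilinear cross3"
    using bilinear_cross bilinear_conv_bounded_bilinear by blast
  from bounded_bilinear.has_vector_derivative[OF this angvel_has_vector_derivative[OF assms]
      normal_has_vector_derivative[OF assms]]
  have "((\<lambda>s. r *\<^sub>R cross3 (\<omega> s) (\<nu> s)) has_vector_derivative
      r *\<^sub>R (cross3 (\<omega> t) (normal_deriv (a t) (u t)) + cross3 (axial (U' t)) (\<nu> t))) (at t)"
    by (rule bounded_linear.has_vector_derivative[OF bounded_linear_scaleR_right])
  then have "(u has_vector_derivative
      r *\<^sub>R (cross3 (\<omega> t) (normal_deriv (a t) (u t)) + cross3 (axial (U' t)) (\<nu> t))) (at t)"
    by (rule has_vector_derivative_transform_within_open[OF _ J(1) assms]) (simp add: velocity_eq)
  then show ?thesis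
    using vector_derivative_unique_at[OF du[OF assms]] by blast
qed

lemma virtual_work:
  assumes "t \<in> J"
  shows "r * \<gamma>\<^sup>2 * (axial (U' t) \<bullet> x) + (u' t + g *\<^sub>R e) \<bullet> cross3 x (\<nu> t) = 0"
proof -
  have "r * \<gamma>\<^sup>2 * (axial (U' t) \<bullet> x)
      + (covD Phi (a t) (u' t) - (- g *\<^sub>R e)) \<bullet> cross3 x (\<nu> t) = 0"
    using noslip_perp_virtual_work[OF orthogonal[OF assms] _ _ newton[OF assms, simplified]] m r
    by simp
  then show ?thesis
    by (simp add: inner_diff_left inner_add_left covD_inner_tangent dot_cross_self)
qed

lemma rolling_equations:
  assumes "t \<in> J"
  shows "axial (U' t) \<bullet> e = 0"
    and "u' t \<bullet> e = - (\<gamma>\<^sup>2 / (1 + \<gamma>\<^sup>2) * r\<^sup>2 * \<kappa> t * (\<omega> t \<bullet> e) * (\<omega> t \<bullet> \<nu> t) + g / (1 + \<gamma>\<^sup>2))"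
    and "\<omega> t \<bullet> normal_deriv (a t) (u t) + axial (U' t) \<bullet> \<nu> t = \<kappa> t * (\<omega> t \<bullet> e) * (u t \<bullet> e)"
proof -
  interpret orthonormal_pair "\<nu> t" e
    using normal_frame[OF onS[OF assms]] .
  have "u t \<bullet> \<nu> t = 0"
    using velocity_eq[OF assms] by (simp add: dot_cross_self)
  note normal_deriv = normal_deriv_tangent[OF onS[OF assms] this, unfolded tau_dir_def]
  show "axial (U' t) \<bullet> e = 0"
    and "u' t \<bullet> e = - (\<gamma>\<^sup>2 / (1 + \<gamma>\<^sup>2) * r\<^sup>2 * \<kappa> t * (\<omega> t \<bullet> e) * (\<omega> t \<bullet> \<nu> t) + g / (1 + \<gamma>\<^sup>2))"
    and "\<omega> t \<bullet> normal_deriv (a t) (u t) + axial (U' t) \<bullet> \<nu> t = \<kappa> t * (\<omega> t \<bullet> e) * (u t \<bullet> e)"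
    using rolling_constraint_equations[OF r \<gamma> velocity_eq[OF assms] normal_deriv
        acceleration_eq[OF assms] virtual_work[OF assms]] .
qed

lemma angvel_axial_constant:
  assumes "s \<in> J" and "t \<in> J"
  shows "\<omega> s \<bullet> e = \<omega> t \<bullet> e"
proof -
  have "((\<lambda>s. \<omega> s \<bullet> e) has_real_derivative 0) (at x within J)" if "x \<in> J" for x
    using has_real_derivative_inner_const[OF angvel_has_vector_derivative[OF that], of e]
    unfolding rolling_equations(1)[OF that] by (rule has_field_derivative_at_within)
  then obtain c where "\<forall>x\<in>J. \<omega> x \<bullet> e = c"
    using has_field_derivative_zero_constant[OF is_interval_convex[OF J(2)]] by blast
  with assms show ?thesis
    by simp
qed

lemma velocity_axial_has_derivative:
  assumes "t \<in> J"
  shows "((\<lambda>t. u t \<bullet> e) has_real_derivative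
      - (\<gamma>\<^sup>2 / (1 + \<gamma>\<^sup>2) * r\<^sup>2 * \<kappa> t * (\<omega> t \<bullet> e) * (\<omega> t \<bullet> \<nu> t) + g / (1 + \<gamma>\<^sup>2))) (at t)"
  using has_real_derivative_inner_const[OF du[OF assms], of e]
  unfolding rolling_equations(2)[OF assms] .

lemma angvel_normal_has_derivative:
  assumes "t \<in> J"
  shows "((\<lambda>t. \<omega> t \<bullet> \<nu> t) has_real_derivative \<kappa> t * (\<omega> t \<bullet> e) * (u t \<bullet> e)) (at t)"
  using has_real_derivative_inner[OF angvel_has_vector_derivative[OF assms]
      normal_has_vector_derivative[OF assms]] rolling_equations(3)[OF assms] by simp

lemma angvel_normal_eq_integral:
  assumes "t \<in> J"
  shows "\<omega> t \<bullet> \<nu> t = \<omega> 0 \<bullet> \<nu> 0 + (\<omega> 0 \<bullet> e) * (LBINT s=0..t. \<kappa> s * (u s \<bullet> e))"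
proof -
  have "continuous_on J a" "continuous_on J u"
    using da du by (auto intro!: continuous_at_imp_continuous_on has_vector_derivative_continuous)
  then have cont: "continuous_on J (\<lambda>s. (\<omega> 0 \<bullet> e) * (\<kappa> s * (u s \<bullet> e)))"
    using continuous_on_curv[OF _ onS] by (auto intro!: continuous_intros)
  have deriv: "((\<lambda>s. \<omega> s \<bullet> \<nu> s) has_real_derivative (\<omega> 0 \<bullet> e) * (\<kappa> s * (u s \<bullet> e))) (at s)"
    if "s \<in> J" for s
    using angvel_normal_has_derivative[OF that] angvel_axial_constant[OF that J(3)]
    by (simp add: mult.commute mult.left_commute)
  show ?thesis
    using interval_integral_eq_diff_of_derivative[OF J(2,3) assms cont deriv]
    by (simp add: zero_ereal_def)
qed

lemma height_has_derivative:
  assumes "t \<in> J"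
  shows "((\<lambda>t. a t \<bullet> e) has_real_derivative u t \<bullet> e) (at t)"
  using has_real_derivative_inner_const[OF da[OF assms]] .

lemma height_velocity_has_derivative:
  assumes "t \<in> J"
  shows "((\<lambda>t. u t \<bullet> e) has_real_derivative
      - (\<gamma>\<^sup>2 / (1 + \<gamma>\<^sup>2) * r\<^sup>2 * \<kappa> t * (\<omega> 0 \<bullet> e)
          * ((\<omega> 0 \<bullet> \<nu> 0) + (\<omega> 0 \<bullet> e) * (LBINT s=0..t. \<kappa> s * (u s \<bullet> e)))
        + g / (1 + \<gamma>\<^sup>2))) (at t)"
  using velocity_axial_has_derivative[OF assms]
  unfolding angvel_axial_constant[OF assms J(3)] angvel_normal_eq_integral[OF assms] .

end

theorem theorem4p3:
  fixes \<phi> :: "real^3 \<Rightarrow> real" and Phi :: "real^3 \<Rightarrow> real^3"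
    and DPhi :: "real^3 \<Rightarrow> ((real^3) \<Rightarrow>\<^sub>L (real^3))"
    and e :: "real^3" and r m \<gamma> g :: real and J :: "real set"
    and A A' U U' :: "real \<Rightarrow> real^3^3" and a u u' :: "real \<Rightarrow> real^3"
  assumes r: "r > 0" and m: "m > 0" and \<gamma>: "\<gamma> > 0"
    and e: "norm e = 1"
    \<comment> \<open>S = {x. phi x = 0} is a smooth (here: C^2) regular cylinder surface with axis e\<close>
    and grad: "\<And>x. (\<phi> has_derivative (\<lambda>h. Phi x \<bullet> h)) (at x)"
    and hess: "\<And>x. (Phi has_derivative blinfun_apply (DPhi x)) (at x)"
    and hess_cont: "continuous_on UNIV DPhi"
    and regular: "\<And>x. \<phi> x = 0 \<Longrightarrow> Phi x \<noteq> 0"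
    and cyl: "\<And>x s. \<phi> (x + s *\<^sub>R e) = \<phi> x"
    \<comment> \<open>the time interval\<close>
    and J: "open J" "is_interval J" "0 \<in> J"
    \<comment> \<open>the path q(t) = (A(t), a(t)) in M = SO(3) x S, with qdot = (U A, u)\<close>
    and SO3: "\<And>t. t \<in> J \<Longrightarrow> orthogonal_matrix (A t) \<and> det (A t) = 1"
    and onS: "\<And>t. t \<in> J \<Longrightarrow> \<phi> (a t) = 0"
    and dA: "\<And>t. t \<in> J \<Longrightarrow> (A has_vector_derivative A' t) (at t)"
    and Udef: "\<And>t. t \<in> J \<Longrightarrow> U t = A' t ** transpose (A t)"
    and dU: "\<And>t. t \<in> J \<Longrightarrow> (U has_vector_derivative U' t) (at t)"
    and da: "\<And>t. t \<in> J \<Longrightarrow> (a has_vector_derivative u t) (at t)"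
    and du: "\<And>t. t \<in> J \<Longrightarrow> (u has_vector_derivative u' t) (at t)"
    \<comment> \<open>constrained Newton's equation with force f = (0, -m g e)\<close>
    and noslip: "\<And>t. t \<in> J \<Longrightarrow> (U t ** A t, u t) \<in> noslip Phi r (A t) (a t)"
    and newton: "\<And>t. t \<in> J \<Longrightarrow>
        (U' t ** A t - 0, covD Phi (a t) (u' t) - (- g *\<^sub>R e))
          \<in> noslip_perp Phi m r \<gamma> (A t) (a t)"
  shows "(\<forall>s\<in>J. \<forall>t\<in>J. angvel (U s) \<bullet> e = angvel (U t) \<bullet> e)
    \<and> (\<forall>t\<in>J.
         ((\<lambda>t. u t \<bullet> e) has_real_derivative
            - (\<gamma>\<^sup>2 / (1 + \<gamma>\<^sup>2) * r\<^sup>2 * curv Phi e (a t) * (angvel (U t) \<bullet> e)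
                 * (angvel (U t) \<bullet> unorm Phi (a t)) + g / (1 + \<gamma>\<^sup>2))) (at t)
       \<and> ((\<lambda>t. angvel (U t) \<bullet> unorm Phi (a t)) has_real_derivative
            curv Phi e (a t) * (angvel (U t) \<bullet> e) * (u t \<bullet> e)) (at t))
    \<and> (\<forall>t\<in>J.
         ((\<lambda>t. a t \<bullet> e) has_real_derivative (u t \<bullet> e)) (at t)
       \<and> ((\<lambda>t. u t \<bullet> e) has_real_derivative
            - (\<gamma>\<^sup>2 / (1 + \<gamma>\<^sup>2) * r\<^sup>2 * curv Phi e (a t) * (angvel (U 0) \<bullet> e)
                 * ((angvel (U 0) \<bullet> unorm Phi (a 0))
                    + (angvel (U 0) \<bullet> e) * (LBINT s=0..t. curv Phi e (a s) * (u s \<bullet> e)))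
               + g / (1 + \<gamma>\<^sup>2))) (at t))"
proof -
  interpret rolling_on_cylinder \<phi> Phi DPhi e r m \<gamma> g J A U U' a u u'
    using r m \<gamma> e grad hess hess_cont regular cyl J SO3 onS dU da du noslip newton
    by unfold_locales auto
  show ?thesis
    using angvel_axial_constant velocity_axial_has_derivative angvel_normal_has_derivative
      height_has_derivative height_velocity_has_derivative
    by blast
qed

end
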